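(* Let $A$ be a finite set and let $<_1$ and $<_2$ be semi-linear strict partial orders on $A$. If the transitive closure $<_1\bar\cup<_2$ of the union of the relations $<_1$ and $<_2$ is irreflexive, then it is a semi-linear strict partial order.
   Context: A strict partial order on $A$ is a transitive irreflexive relation. A strict partial order $<$ is semi-linear if there is a surjective function $h:A\to\{1,\dots,l\}$ (for some $l$) such that $a<b$ iff $h(a)<h(b)$. *)

theory Defs
  imports Main
begin

definition strict_partial_order_on :: "'a set \<Rightarrow> 'a rel \<Rightarrow> bool" where
  "strict_partial_order_on A r \<longleftrightarrow> r \<subseteq> A \<times> A \<and> trans r \<and> irrefl r"

definition semi_linear_on :: "'a set \<Rightarrow> 'a rel \<Rightarrow> bool" where
  "semi_linear_on A r \<longleftrightarrow> strict_partial_order_on A r \<and>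
     (\<exists>(l::nat) (h::'a \<Rightarrow> nat). h ` A = {1..l} \<and>
        (\<forall>a\<in>A. \<forall>b\<in>A. (a, b) \<in> r \<longleftrightarrow> h a < h b))"

end

theory Submission
  imports Defs
begin

text \<open>On a finite set, the semi-linear orders are exactly the strict partial orders that are
  negatively transitive, i.e. strict weak orders: ranks are obtained by repeatedly peeling
  off the set of maximal elements, which negative transitivity places above everything else.
  Negative transitivity of two relations passes to their union and then to its transitive
  closure, because it only has to be checked on the first step of a chain.\<close>

definition negatively_transitive_on :: "'a set \<Rightarrow> 'a rel \<Rightarrow> bool" where
  "negatively_transitive_on A r \<longleftrightarrow>
     (\<forall>a b c. (a, b) \<in> r \<longrightarrow> c \<in> A \<longrightarrow> (a, c) \<in> r \<or> (c, b) \<in> r)"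

definition ranks_on :: "'a set \<Rightarrow> 'a rel \<Rightarrow> nat \<Rightarrow> ('a \<Rightarrow> nat) \<Rightarrow> bool" where
  "ranks_on A r l h \<longleftrightarrow> h ` A = {1..l} \<and> (\<forall>a\<in>A. \<forall>b\<in>A. (a, b) \<in> r \<longleftrightarrow> h a < h b)"

lemma semi_linear_on_iff_ranks_on:
  "semi_linear_on A r \<longleftrightarrow> strict_partial_order_on A r \<and> (\<exists>l h. ranks_on A r l h)"
  by (simp add: semi_linear_on_def ranks_on_def)

lemma semi_linear_on_subset: "semi_linear_on A r \<Longrightarrow> r \<subseteq> A \<times> A"
  by (simp add: semi_linear_on_def strict_partial_order_on_def)

lemma negatively_transitive_on_if_ranked:
  fixes h :: "'a \<Rightarrow> 'b::linorder"
  assumes "r \<subseteq> A \<times> A" and ranked: "\<forall>a\<in>A. \<forall>b\<in>A. (a, b) \<in> r \<longleftrightarrow> h a < h b"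
  shows "negatively_transitive_on A r"
  unfolding negatively_transitive_on_def
proof (intro allI impI)
  fix a b c assume "(a, b) \<in> r" "c \<in> A"
  moreover from \<open>(a, b) \<in> r\<close> have "a \<in> A" "b \<in> A" using assms(1) by auto
  ultimately have "h a < h c \<or> h c < h b"
    using ranked by auto
  with \<open>a \<in> A\<close> \<open>b \<in> A\<close> \<open>c \<in> A\<close> show "(a, c) \<in> r \<or> (c, b) \<in> r"
    using ranked by blast
qed

lemma semi_linear_on_negatively_transitive_on:
  assumes "semi_linear_on A r"
  shows "negatively_transitive_on A r"
proof -
  from assms obtain l and h :: "'a \<Rightarrow> nat"
    where "r \<subseteq> A \<times> A" and "\<forall>a\<in>A. \<forall>b\<in>A. (a, b) \<in> r \<longleftrightarrow> h a < h b"
    unfolding semi_linear_on_def strict_partial_order_on_def by blast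
  then show ?thesis by (rule negatively_transitive_on_if_ranked)
qed

lemma negatively_transitive_on_Un:
  assumes "negatively_transitive_on A r" and "negatively_transitive_on A s"
  shows "negatively_transitive_on A (r \<union> s)"
  using assms unfolding negatively_transitive_on_def by blast

lemma negatively_transitive_on_trancl:
  assumes "negatively_transitive_on A r"
  shows "negatively_transitive_on A (r\<^sup>+)"
  unfolding negatively_transitive_on_def
proof (intro allI impI)
  fix a b c assume "(a, b) \<in> r\<^sup>+" "c \<in> A"
  from \<open>(a, b) \<in> r\<^sup>+\<close> obtain x where ax: "(a, x) \<in> r" and xb: "(x, b) \<in> r\<^sup>*"
    by (blast dest: tranclD)
  from ax \<open>c \<in> A\<close> assms have "(a, c) \<in> r \<or> (c, x) \<in> r"
    unfolding negatively_transitive_on_def by blast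
  then show "(a, c) \<in> r\<^sup>+ \<or> (c, b) \<in> r\<^sup>+"
    using xb by (blast intro: rtrancl_into_trancl2)
qed

lemma strict_partial_order_on_ex_maximal:
  assumes "finite A" and "A \<noteq> {}" and "strict_partial_order_on A r"
  shows "\<exists>m\<in>A. \<forall>b\<in>A. (m, b) \<notin> r"
proof -
  have "finite r" and "acyclic r"
    using assms finite_subset[of r "A \<times> A"]
    unfolding strict_partial_order_on_def by (auto simp: acyclic_irrefl)
  then have "wf (r\<inverse>)" by (rule finite_acyclic_wf_converse)
  then obtain m where "m \<in> A" and "\<And>b. (b, m) \<in> r\<inverse> \<Longrightarrow> b \<notin> A"
    using wfE_min' \<open>A \<noteq> {}\<close> by blast
  then show ?thesis by blast
qed

lemma ranks_on_add_top:
  assumes h: "ranks_on (A - M) (Restr r (A - M)) l h"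
    and "M \<subseteq> A" and "M \<noteq> {}"
    and M_top: "\<And>a b. a \<in> M \<Longrightarrow> b \<in> A \<Longrightarrow> (a, b) \<notin> r"
    and below_M: "\<And>a b. a \<in> A - M \<Longrightarrow> b \<in> M \<Longrightarrow> (a, b) \<in> r"
  shows "ranks_on A r (Suc l) (\<lambda>a. if a \<in> M then Suc l else h a)"
    (is "ranks_on A r (Suc l) ?g")
proof -
  have h_img: "h ` (A - M) = {1..l}"
    and h_ord: "\<forall>a\<in>A - M. \<forall>b\<in>A - M. (a, b) \<in> r \<longleftrightarrow> h a < h b"
    using h unfolding ranks_on_def by auto
  have "?g ` A = ?g ` (A - M) \<union> ?g ` M"
    using \<open>M \<subseteq> A\<close> by blast
  also have "\<dots> = h ` (A - M) \<union> {Suc l}"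
    using \<open>M \<noteq> {}\<close> by auto
  also have "\<dots> = {1..Suc l}"
    using h_img by auto
  finally have "?g ` A = {1..Suc l}" .
  moreover have "(a, b) \<in> r \<longleftrightarrow> ?g a < ?g b" if "a \<in> A" "b \<in> A" for a b
  proof -
    have h_le: "h c \<le> l" if "c \<in> A" "c \<notin> M" for c
      using h_img that by auto
    show ?thesis
      using that h_ord M_top below_M h_le[of a] h_le[of b]
      by (cases "a \<in> M"; cases "b \<in> M") auto
  qed
  ultimately show ?thesis
    unfolding ranks_on_def by blast
qed

lemma ex_ranks_on:
  assumes "finite A" and "strict_partial_order_on A r" and "negatively_transitive_on A r"
  shows "\<exists>l h. ranks_on A r l h"
  using assms
proof (induction "card A" arbitrary: A r rule: less_induct)
  case less
  show ?case
  proof (cases "A = {}")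
    case True
    then show ?thesis unfolding ranks_on_def by auto
  next
    case False
    define M where "M = {a\<in>A. \<forall>b\<in>A. (a, b) \<notin> r}"
    have "M \<noteq> {}"
      using strict_partial_order_on_ex_maximal[OF less.prems(1) False less.prems(2)]
      unfolding M_def by blast
    have "M \<subseteq> A" unfolding M_def by blast
    have below_M: "(a, b) \<in> r" if "a \<in> A - M" "b \<in> M" for a b
    proof -
      from that obtain c where "c \<in> A" "(a, c) \<in> r" unfolding M_def by blast
      with that less.prems(3) have "(a, b) \<in> r \<or> (b, c) \<in> r"
        unfolding negatively_transitive_on_def M_def by blast
      with that \<open>c \<in> A\<close> show ?thesis unfolding M_def by blast
    qed
    have "card (A - M) < card A"
      using \<open>M \<noteq> {}\<close> \<open>M \<subseteq> A\<close> less.prems(1) by (intro psubset_card_mono) auto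
    moreover have "strict_partial_order_on (A - M) (Restr r (A - M))"
      using less.prems(2) unfolding strict_partial_order_on_def irrefl_def
      by (auto intro: trans_Restr)
    moreover have "negatively_transitive_on (A - M) (Restr r (A - M))"
      using less.prems(3) unfolding negatively_transitive_on_def by blast
    ultimately obtain l h where h: "ranks_on (A - M) (Restr r (A - M)) l h"
      using less.hyps less.prems(1) by blast
    have "ranks_on A r (Suc l) (\<lambda>a. if a \<in> M then Suc l else h a)"
      by (rule ranks_on_add_top[OF h \<open>M \<subseteq> A\<close> \<open>M \<noteq> {}\<close> _ below_M]) (auto simp: M_def)
    then show ?thesis by blast
  qed
qed

theorem lemma4p2:
  fixes A :: "'a set" and r1 r2 :: "'a rel"
  assumes "finite A"
    and "semi_linear_on A r1"
    and "semi_linear_on A r2"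
    and "irrefl ((r1 \<union> r2)\<^sup>+)"
  shows "semi_linear_on A ((r1 \<union> r2)\<^sup>+)"
proof -
  have "r1 \<union> r2 \<subseteq> A \<times> A"
    using assms(2,3) by (simp add: semi_linear_on_subset)
  then have "(r1 \<union> r2)\<^sup>+ \<subseteq> A \<times> A"
    by (rule trancl_subset_Sigma)
  with assms(4) have "strict_partial_order_on A ((r1 \<union> r2)\<^sup>+)"
    unfolding strict_partial_order_on_def by simp
  moreover have "negatively_transitive_on A ((r1 \<union> r2)\<^sup>+)"
    using assms(2,3) by (intro negatively_transitive_on_trancl negatively_transitive_on_Un
        semi_linear_on_negatively_transitive_on)
  ultimately show ?thesis
    unfolding semi_linear_on_iff_ranks_on using assms(1) by (blast intro: ex_ranks_on)
qed

end
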